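(* Let $M_{\mathcal X}>0$, $M_{\mathcal Y}>0$, $\kappa_t>0$, $\sigma_t>0$ for $t\in\mathcal T$, and $r=\sum_{t\in\mathcal T}\kappa_t/\sigma_t$. Consider the two-player game in which $\mathcal X$ chooses $\boldsymbol X\in\mathbb R^T_{\ge0}$ with $\sum_t\kappa_tX_t=M_{\mathcal X}$ and receives $\pi^*_{\mathrm{WL}}(\boldsymbol X,\boldsymbol Y)$, while $\mathcal Y$ chooses $\boldsymbol Y\in\mathbb R^T_{\ge0}$ with $\sum_t\sigma_tY_t=M_{\mathcal Y}$ and receives $1-\pi^*_{\mathrm{WL}}(\boldsymbol X,\boldsymbol Y)$. Then the equilibrium investment profile is $$X^*_t=\frac{M_{\mathcal X}}{\kappa_t}\cdot\frac{\kappa_t/\sigma_t}{r},\qquad Y^*_t=\frac{M_{\mathcal Y}}{\sigma_t}\cdot\frac{\kappa_t/\sigma_t}{r},\qquad t\in\mathcal T,$$ and the equilibrium payoffs are $\pi^*_{\mathrm{WL}}(\boldsymbol X^*,\boldsymbol Y^* )=L\big(\frac{M_{\mathcal Y}}{M_{\mathcal X}}r\big)$ for $\mathcal X$ and $1-L\big(\frac{M_{\mathcal Y}}{M_{\mathcal X}}r\big)$ for $\mathcal Y$.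
   Context: $\mathcal T=\{1,\dots,T\}$, $T\ge1$. The function $L:[0,\infty]\to[0,1]$ is $L(\alpha)=1-\alpha/2$ if $\alpha\le1$, $L(\alpha)=1/(2\alpha)$ if $1<\alpha<\infty$, $L(\infty)=0$. For $\boldsymbol X,\boldsymbol Y\in\mathbb R^T_{\ge0}$, $\alpha(\boldsymbol X,\boldsymbol Y)=\sum_tY_t/X_t\in[0,\infty]$, where a term with $Y_t=0$ equals $0$ and a term with $X_t=0<Y_t$ equals $+\infty$; $\pi^*_{\mathrm{WL}}(\boldsymbol X,\boldsymbol Y)=L(\alpha(\boldsymbol X,\boldsymbol Y))$. An equilibrium is a feasible pair from which neither player can strictly improve its own payoff by a unilateral feasible deviation. *)

theory Defs
  imports "HOL-Analysis.Analysis"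
begin

text \<open>Index set is {1..T}; vectors are functions nat \<Rightarrow> real, only values on {1..T} matter.\<close>

definition Lfun :: "ereal \<Rightarrow> real" where
  "Lfun a = (if a \<le> 1 then 1 - real_of_ereal a / 2
             else if a = \<infinity> then 0 else 1 / (2 * real_of_ereal a))"

definition alpha :: "nat \<Rightarrow> (nat \<Rightarrow> real) \<Rightarrow> (nat \<Rightarrow> real) \<Rightarrow> ereal" where
  "alpha T X Y = (\<Sum>t\<in>{1..T}. if Y t = 0 then 0 else if X t = 0 then \<infinity> else ereal (Y t / X t))"

definition piWL :: "nat \<Rightarrow> (nat \<Rightarrow> real) \<Rightarrow> (nat \<Rightarrow> real) \<Rightarrow> real" where
  "piWL T X Y = Lfun (alpha T X Y)"

definition feasible :: "nat \<Rightarrow> (nat \<Rightarrow> real) \<Rightarrow> real \<Rightarrow> (nat \<Rightarrow> real) \<Rightarrow> bool" where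
  "feasible T c M Z \<longleftrightarrow> (\<forall>t\<in>{1..T}. Z t \<ge> 0) \<and> (\<Sum>t\<in>{1..T}. c t * Z t) = M"

definition is_equilibrium ::
  "nat \<Rightarrow> (nat \<Rightarrow> real) \<Rightarrow> (nat \<Rightarrow> real) \<Rightarrow> real \<Rightarrow> real \<Rightarrow> (nat \<Rightarrow> real) \<Rightarrow> (nat \<Rightarrow> real) \<Rightarrow> bool" where
  "is_equilibrium T \<kappa> \<sigma> MX MY X Y \<longleftrightarrow>
     feasible T \<kappa> MX X \<and> feasible T \<sigma> MY Y \<and>
     (\<forall>X'. feasible T \<kappa> MX X' \<longrightarrow> piWL T X' Y \<le> piWL T X Y) \<and>
     (\<forall>Y'. feasible T \<sigma> MY Y' \<longrightarrow> 1 - piWL T X Y' \<le> 1 - piWL T X Y)"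

end

theory Submission
  imports Defs
begin

text \<open>Let \<open>\<alpha>\<^sub>* = MY r / MX\<close>. The profile \<open>Xs\<close> makes \<open>\<sigma>\<^sub>t X\<^sub>t\<close> constant, so \<open>\<alpha>(Xs, Y)\<close> is
  proportional to \<open>\<Sum> \<sigma>\<^sub>t Y\<^sub>t = MY\<close> and equals \<open>\<alpha>\<^sub>*\<close> for every feasible \<open>Y\<close>; against \<open>Ys\<close> the
  Engel form of Cauchy-Schwarz, \<open>(\<Sum> u)\<^sup>2 / \<Sum> w \<le> \<Sum> u\<^sup>2 / w\<close>, gives \<open>\<alpha>(X, Ys) \<ge> \<alpha>\<^sub>*\<close>.
  As \<open>L\<close> is decreasing, neither player can gain. Conversely, at any equilibrium the payoff is
  \<open>L \<alpha>\<^sub>*\<close>. Deviations of \<open>Y\<close> that spend the whole budget on a single \<open>t\<close> force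
  \<open>\<sigma>\<^sub>t X\<^sub>t \<ge> MX / r\<close>, with equality everywhere by the budget constraint; the deviation of \<open>X\<close>
  proportional to \<open>sqrt (Y\<^sub>t / \<kappa>\<^sub>t)\<close> forces the equality case of Cauchy-Schwarz, which determines \<open>Y\<close>.\<close>

text \<open>The Lagrange-type identity behind the Engel form of the Cauchy-Schwarz inequality.\<close>
lemma sum_sq_div_minus_sq_sum_div:
  fixes u w :: "'a \<Rightarrow> real"
  assumes "\<forall>t\<in>I. w t \<noteq> 0" and "sum w I \<noteq> 0"
  shows "(\<Sum>t\<in>I. u t ^ 2 / w t) - (sum u I) ^ 2 / sum w I
       = (\<Sum>t\<in>I. w t * (u t / w t - sum u I / sum w I) ^ 2)"
proof -
  define c where "c = sum u I / sum w I"
  have "(\<Sum>t\<in>I. w t * (u t / w t - c) ^ 2) = (\<Sum>t\<in>I. u t ^ 2 / w t - 2 * c * u t + c ^ 2 * w t)"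
    using assms(1) by (intro sum.cong) (auto simp: field_simps power2_eq_square)
  also have "\<dots> = (\<Sum>t\<in>I. u t ^ 2 / w t) - 2 * c * sum u I + c ^ 2 * sum w I"
    by (simp add: sum.distrib sum_subtractf sum_distrib_left)
  also have "\<dots> = (\<Sum>t\<in>I. u t ^ 2 / w t) - (sum u I) ^ 2 / sum w I"
    using assms(2) by (simp add: c_def field_simps power2_eq_square)
  finally show ?thesis by (simp add: c_def)
qed

lemma sq_sum_div_le_sum_sq_div:
  fixes u w :: "'a \<Rightarrow> real"
  assumes "finite I" and "\<forall>t\<in>I. w t > 0"
  shows "(sum u I) ^ 2 / sum w I \<le> (\<Sum>t\<in>I. u t ^ 2 / w t)"
proof (cases "I = {}")
  case False
  then have "sum w I > 0" using assms by (intro sum_pos) auto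
  moreover have "0 \<le> (\<Sum>t\<in>I. w t * (u t / w t - sum u I / sum w I) ^ 2)"
    using assms(2) by (intro sum_nonneg) auto
  ultimately show ?thesis
    using sum_sq_div_minus_sq_sum_div[of I w u] assms(2) by force
qed simp

lemma sum_sq_div_le_imp_proportional:
  fixes u w :: "'a \<Rightarrow> real"
  assumes "finite I" and "\<forall>t\<in>I. w t > 0"
    and "(\<Sum>t\<in>I. u t ^ 2 / w t) \<le> (sum u I) ^ 2 / sum w I"
  shows "\<forall>t\<in>I. u t = sum u I / sum w I * w t"
proof (cases "I = {}")
  case False
  define c where "c = sum u I / sum w I"
  have "sum w I > 0" using assms False by (intro sum_pos) auto
  then have "(\<Sum>t\<in>I. w t * (u t / w t - c) ^ 2) = 0"
    using sum_sq_div_minus_sq_sum_div[of I w u] assms(2,3)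
      sq_sum_div_le_sum_sq_div[OF assms(1,2), of u]
    unfolding c_def by force
  then have "\<forall>t\<in>I. w t * (u t / w t - c) ^ 2 = 0"
    using assms(1,2) by (subst (asm) sum_nonneg_eq_0_iff) auto
  then show ?thesis
    using assms(2) unfolding c_def[symmetric] by (force simp: divide_eq_eq)
qed simp

lemma Lfun_ereal: "Lfun (ereal x) = (if x \<le> 1 then 1 - x / 2 else 1 / (2 * x))"
  by (simp add: Lfun_def)

lemma Lfun_infinity [simp]: "Lfun \<infinity> = 0"
  by (simp add: Lfun_def)

lemma Lfun_strict_antimono:
  assumes "0 \<le> a" and "a < b"
  shows "Lfun b < Lfun a"
proof -
  obtain x where x: "a = ereal x" "0 \<le> x" using assms by (cases a) auto
  show ?thesis
  proof (cases b)
    case (real y)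
    have "x < y" using assms x real by simp
    have "1 + x * y < y * 2" if "x \<le> 1" "1 < y"
    proof -
      have "x * y \<le> y" using mult_right_mono[of x 1 y] that by simp
      then show ?thesis using that by linarith
    qed
    then show ?thesis using \<open>x < y\<close> x real by (auto simp: Lfun_ereal field_simps)
  qed (use assms x in \<open>auto simp: Lfun_ereal\<close>)
qed

lemma Lfun_le_Lfun_iff:
  assumes "0 \<le> a" and "0 \<le> b"
  shows "Lfun a \<le> Lfun b \<longleftrightarrow> b \<le> a"
proof
  show "b \<le> a" if "Lfun a \<le> Lfun b"
    using that Lfun_strict_antimono[OF assms(1), of b] by (meson leD le_less_linear)
  show "Lfun a \<le> Lfun b" if "b \<le> a"
    using that Lfun_strict_antimono[OF assms(2), of a] by (metis order.order_iff_strict less_imp_le)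
qed

lemma alpha_nonneg:
  assumes "feasible T c M X" and "feasible T c' M' Y"
  shows "alpha T X Y \<ge> 0"
  unfolding alpha_def by (rule sum_nonneg) (use assms in \<open>auto simp: feasible_def\<close>)

lemma alpha_eq_sum:
  assumes "\<forall>t\<in>{1..T}. Y t \<noteq> 0 \<longrightarrow> X t \<noteq> 0"
  shows "alpha T X Y = ereal (\<Sum>t\<in>{1..T}. Y t / X t)"
proof -
  have "alpha T X Y = (\<Sum>t\<in>{1..T}. ereal (Y t / X t))"
    unfolding alpha_def by (rule sum.cong) (use assms in auto)
  then show ?thesis by simp
qed

lemma alpha_eq_infinity:
  assumes "\<forall>t\<in>{1..T}. X t \<ge> 0 \<and> Y t \<ge> 0" and "s \<in> {1..T}" and "Y s \<noteq> 0" and "X s = 0"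
  shows "alpha T X Y = \<infinity>"
proof -
  let ?f = "\<lambda>t. if Y t = 0 then 0 else if X t = 0 then \<infinity> else ereal (Y t / X t)"
  have "sum ?f {1..T} = ?f s + sum ?f ({1..T} - {s})"
    by (rule sum.remove) (use assms in auto)
  moreover have "sum ?f ({1..T} - {s}) \<ge> 0"
    by (rule sum_nonneg) (use assms in auto)
  ultimately show ?thesis using assms(3,4) unfolding alpha_def by simp
qed

lemma alpha_concentrated:
  assumes "s \<in> {1..T}" and "X s > 0"
  shows "alpha T X (\<lambda>t. if t = s then y else 0) = ereal (y / X s)"
proof -
  have "alpha T X (\<lambda>t. if t = s then y else 0)
      = (\<Sum>t\<in>{1..T}. if t = s then ereal (y / X s) else 0)"
    unfolding alpha_def by (rule sum.cong) (use assms in auto)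
  also have "\<dots> = ereal (y / X s)"
    using assms(1) by (simp add: sum.delta)
  finally show ?thesis .
qed

locale budget_game =
  fixes T :: nat and \<kappa> \<sigma> :: "nat \<Rightarrow> real" and MX MY r :: real and Xs Ys :: "nat \<Rightarrow> real"
  assumes T_pos: "T \<ge> 1" and MX_pos: "MX > 0" and MY_pos: "MY > 0"
    and \<kappa>_pos: "\<forall>t\<in>{1..T}. \<kappa> t > 0" and \<sigma>_pos: "\<forall>t\<in>{1..T}. \<sigma> t > 0"
    and r_def: "r = (\<Sum>t\<in>{1..T}. \<kappa> t / \<sigma> t)"
    and Xs_def: "Xs = (\<lambda>t. MX / \<kappa> t * ((\<kappa> t / \<sigma> t) / r))"
    and Ys_def: "Ys = (\<lambda>t. MY / \<sigma> t * ((\<kappa> t / \<sigma> t) / r))"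
begin

abbreviation alpha_star :: real where
  "alpha_star \<equiv> MY / MX * r"

lemma \<kappa>_gt0: "t \<in> {1..T} \<Longrightarrow> \<kappa> t > 0"
  using \<kappa>_pos by blast

lemma \<sigma>_gt0: "t \<in> {1..T} \<Longrightarrow> \<sigma> t > 0"
  using \<sigma>_pos by blast

lemma r_pos: "r > 0"
  unfolding r_def using T_pos \<kappa>_gt0 \<sigma>_gt0 by (intro sum_pos) auto

lemma alpha_star_pos: "alpha_star > 0"
  using MX_pos MY_pos r_pos by simp

lemma sum_shares: "(\<Sum>t\<in>{1..T}. M / r * (\<kappa> t / \<sigma> t)) = M"
proof -
  have "(\<Sum>t\<in>{1..T}. M / r * (\<kappa> t / \<sigma> t)) = M / r * r"
    by (simp only: sum_distrib_left[symmetric] r_def[symmetric])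
  then show ?thesis using r_pos by simp
qed

lemma Xs_eq: "t \<in> {1..T} \<Longrightarrow> Xs t = MX / r / \<sigma> t"
  using \<kappa>_gt0[of t] by (simp add: Xs_def)

lemma Ys_eq: "t \<in> {1..T} \<Longrightarrow> Ys t = MY / r * (\<kappa> t / \<sigma> t) / \<sigma> t"
  by (simp add: Ys_def)

lemma Xs_pos: "t \<in> {1..T} \<Longrightarrow> Xs t > 0"
  using \<sigma>_gt0[of t] MX_pos r_pos by (simp add: Xs_eq)

lemma Ys_pos: "t \<in> {1..T} \<Longrightarrow> Ys t > 0"
  using \<kappa>_gt0[of t] \<sigma>_gt0[of t] MY_pos r_pos by (simp add: Ys_eq)

lemma feasible_Xs: "feasible T \<kappa> MX Xs"
proof -
  have "(\<Sum>t\<in>{1..T}. \<kappa> t * Xs t) = (\<Sum>t\<in>{1..T}. MX / r * (\<kappa> t / \<sigma> t))"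
    by (rule sum.cong[OF refl]) (simp add: Xs_eq)
  also have "\<dots> = MX" by (rule sum_shares)
  finally show ?thesis
    using Xs_pos by (auto simp: feasible_def less_imp_le)
qed

lemma feasible_Ys: "feasible T \<sigma> MY Ys"
proof -
  have "(\<Sum>t\<in>{1..T}. \<sigma> t * Ys t) = (\<Sum>t\<in>{1..T}. MY / r * (\<kappa> t / \<sigma> t))"
    by (rule sum.cong[OF refl]) (use \<sigma>_gt0 in \<open>simp add: Ys_eq\<close>)
  also have "\<dots> = MY" by (rule sum_shares)
  finally show ?thesis
    using Ys_pos by (auto simp: feasible_def less_imp_le)
qed

lemma alpha_Xs:
  assumes "feasible T \<sigma> MY Y"
  shows "alpha T Xs Y = ereal alpha_star"
proof -
  have "alpha T Xs Y = ereal (\<Sum>t\<in>{1..T}. Y t / Xs t)"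
    using Xs_pos by (intro alpha_eq_sum) (metis less_irrefl)
  also have "(\<Sum>t\<in>{1..T}. Y t / Xs t) = r / MX * (\<Sum>t\<in>{1..T}. \<sigma> t * Y t)"
    unfolding sum_distrib_left by (rule sum.cong[OF refl]) (simp add: Xs_eq)
  also have "\<dots> = alpha_star"
    using assms by (simp add: feasible_def)
  finally show ?thesis .
qed

lemma alpha_Ys_ge:
  assumes "feasible T \<kappa> MX X"
  shows "ereal alpha_star \<le> alpha T X Ys"
proof (cases "\<exists>s\<in>{1..T}. X s = 0")
  case True
  then obtain s where "s \<in> {1..T}" "X s = 0" by blast
  moreover have "Ys s \<noteq> 0" using Ys_pos[OF \<open>s \<in> {1..T}\<close>] by simp
  ultimately have "alpha T X Ys = \<infinity>"
    using assms Ys_pos by (intro alpha_eq_infinity) (auto simp: feasible_def less_imp_le)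
  then show ?thesis by simp
next
  case False
  then have X_pos: "\<forall>t\<in>{1..T}. \<kappa> t * X t > 0"
    using assms \<kappa>_gt0 by (force simp: feasible_def order_le_less)
  have Ys_div_X: "(\<Sum>t\<in>{1..T}. Ys t / X t)
      = MY / r * (\<Sum>t\<in>{1..T}. (\<kappa> t / \<sigma> t) ^ 2 / (\<kappa> t * X t))"
    unfolding sum_distrib_left
    by (rule sum.cong[OF refl]) (use \<kappa>_gt0 in \<open>simp add: Ys_eq power2_eq_square\<close>)
  have "r ^ 2 / MX \<le> (\<Sum>t\<in>{1..T}. (\<kappa> t / \<sigma> t) ^ 2 / (\<kappa> t * X t))"
    using sq_sum_div_le_sum_sq_div[OF _ X_pos, of "\<lambda>t. \<kappa> t / \<sigma> t"] assms
    by (simp add: feasible_def r_def)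
  then have "ereal alpha_star \<le> ereal (\<Sum>t\<in>{1..T}. Ys t / X t)"
    unfolding Ys_div_X
    using mult_left_mono[of "r ^ 2 / MX" _ "MY / r"] MY_pos r_pos by (simp add: power2_eq_square)
  also have "\<dots> = alpha T X Ys"
    using False by (subst alpha_eq_sum) auto
  finally show ?thesis .
qed

lemma piWL_Xs_Ys: "piWL T Xs Ys = Lfun (ereal alpha_star)"
  by (simp add: piWL_def alpha_Xs[OF feasible_Ys])

lemma equilibrium_Xs_Ys: "is_equilibrium T \<kappa> \<sigma> MX MY Xs Ys"
  unfolding is_equilibrium_def
proof (intro conjI allI impI feasible_Xs feasible_Ys)
  fix X' assume X': "feasible T \<kappa> MX X'"
  show "piWL T X' Ys \<le> piWL T Xs Ys"
    unfolding piWL_Xs_Ys unfolding piWL_def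
    using alpha_Ys_ge[OF X'] alpha_star_pos alpha_nonneg[OF X' feasible_Ys]
    by (simp add: Lfun_le_Lfun_iff)
next
  fix Y' assume "feasible T \<sigma> MY Y'"
  then show "1 - piWL T Xs Y' \<le> 1 - piWL T Xs Ys"
    unfolding piWL_Xs_Ys unfolding piWL_def by (simp add: alpha_Xs)
qed

lemma equilibrium_piWL:
  assumes "is_equilibrium T \<kappa> \<sigma> MX MY X Y"
  shows "piWL T X Y = Lfun (ereal alpha_star)"
proof -
  have X: "feasible T \<kappa> MX X" and Y: "feasible T \<sigma> MY Y"
    using assms by (simp_all add: is_equilibrium_def)
  have "Lfun (ereal alpha_star) = piWL T Xs Y"
    by (simp add: piWL_def alpha_Xs[OF Y])
  also have "\<dots> \<le> piWL T X Y"
    using assms feasible_Xs by (simp add: is_equilibrium_def)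
  finally have lower: "Lfun (ereal alpha_star) \<le> piWL T X Y" .
  have "piWL T X Y \<le> piWL T X Ys"
    using assms feasible_Ys by (simp add: is_equilibrium_def)
  also have "\<dots> \<le> Lfun (ereal alpha_star)"
    unfolding piWL_def using alpha_Ys_ge[OF X] alpha_star_pos
    by (simp add: Lfun_le_Lfun_iff alpha_nonneg[OF X feasible_Ys])
  finally show ?thesis using lower by simp
qed

lemma equilibrium_alpha_le:
  assumes "is_equilibrium T \<kappa> \<sigma> MX MY X Y" and "feasible T \<sigma> MY Y'"
  shows "alpha T X Y' \<le> ereal alpha_star"
proof -
  have "1 - piWL T X Y' \<le> 1 - piWL T X Y"
    using assms by (simp add: is_equilibrium_def)
  then have "Lfun (ereal alpha_star) \<le> Lfun (alpha T X Y')"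
    using equilibrium_piWL[OF assms(1)] by (simp add: piWL_def)
  moreover have "alpha T X Y' \<ge> 0"
    using assms by (intro alpha_nonneg) (auto simp: is_equilibrium_def)
  ultimately show ?thesis
    using alpha_star_pos by (simp add: Lfun_le_Lfun_iff)
qed

lemma equilibrium_alpha_ge:
  assumes "is_equilibrium T \<kappa> \<sigma> MX MY X Y" and "feasible T \<kappa> MX X'"
  shows "ereal alpha_star \<le> alpha T X' Y"
proof -
  have "piWL T X' Y \<le> piWL T X Y"
    using assms by (simp add: is_equilibrium_def)
  then have "Lfun (alpha T X' Y) \<le> Lfun (ereal alpha_star)"
    using equilibrium_piWL[OF assms(1)] by (simp add: piWL_def)
  moreover have "alpha T X' Y \<ge> 0"
    using assms by (intro alpha_nonneg) (auto simp: is_equilibrium_def)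
  ultimately show ?thesis
    using alpha_star_pos by (simp add: Lfun_le_Lfun_iff)
qed

lemma X_lower_bound:
  assumes X: "feasible T \<kappa> MX X"
    and best: "\<And>Y'. feasible T \<sigma> MY Y' \<Longrightarrow> alpha T X Y' \<le> ereal alpha_star"
    and s: "s \<in> {1..T}"
  shows "MX / r \<le> \<sigma> s * X s"
proof -
  define Y' where "Y' = (\<lambda>t. if t = s then MY / \<sigma> s else 0)"
  have "(\<Sum>t\<in>{1..T}. \<sigma> t * Y' t) = (\<Sum>t\<in>{1..T}. if t = s then MY else 0)"
    by (rule sum.cong[OF refl]) (use \<sigma>_gt0[OF s] in \<open>simp add: Y'_def\<close>)
  then have Y': "feasible T \<sigma> MY Y'"
    using s MY_pos \<sigma>_gt0[OF s] by (simp add: feasible_def Y'_def)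
  have "X s \<noteq> 0"
  proof
    assume "X s = 0"
    then have "alpha T X Y' = \<infinity>"
      using X Y' s MY_pos \<sigma>_gt0[OF s]
      by (intro alpha_eq_infinity[of _ _ _ s]) (auto simp: feasible_def Y'_def)
    with best[OF Y'] show False by simp
  qed
  moreover have "X s \<ge> 0" using X s unfolding feasible_def by blast
  ultimately have X_s_pos: "X s > 0" by simp
  have "MY / \<sigma> s / X s \<le> alpha_star"
    using best[OF Y'] alpha_concentrated[of s T X "MY / \<sigma> s", OF s X_s_pos] by (simp add: Y'_def)
  then show ?thesis
    using X_s_pos \<sigma>_gt0[OF s] MX_pos MY_pos r_pos by (simp add: field_simps)
qed

lemma X_unique:
  assumes X: "feasible T \<kappa> MX X"
    and best: "\<And>Y'. feasible T \<sigma> MY Y' \<Longrightarrow> alpha T X Y' \<le> ereal alpha_star"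
    and t: "t \<in> {1..T}"
  shows "X t = Xs t"
proof -
  have lower: "MX / r \<le> \<sigma> s * X s" if "s \<in> {1..T}" for s
    using X_lower_bound[OF X] best that by blast
  have "\<sigma> t * X t = MX / r"
  proof (rule ccontr)
    assume "\<sigma> t * X t \<noteq> MX / r"
    then have strict: "MX / r * (\<kappa> t / \<sigma> t) < \<sigma> t * X t * (\<kappa> t / \<sigma> t)"
      using lower[OF t] \<kappa>_gt0[OF t] \<sigma>_gt0[OF t] by (intro mult_strict_right_mono) auto
    have "(\<Sum>s\<in>{1..T}. MX / r * (\<kappa> s / \<sigma> s)) < (\<Sum>s\<in>{1..T}. \<sigma> s * X s * (\<kappa> s / \<sigma> s))"
    proof (rule sum_strict_mono_ex1)
      show "\<forall>s\<in>{1..T}. MX / r * (\<kappa> s / \<sigma> s) \<le> \<sigma> s * X s * (\<kappa> s / \<sigma> s)"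
      proof
        fix s assume s: "s \<in> {1..T}"
        show "MX / r * (\<kappa> s / \<sigma> s) \<le> \<sigma> s * X s * (\<kappa> s / \<sigma> s)"
          by (rule mult_right_mono[OF lower[OF s]]) (use \<kappa>_gt0[OF s] \<sigma>_gt0[OF s] in simp)
      qed
    qed (use t strict in blast)+
    also have "\<dots> = (\<Sum>s\<in>{1..T}. \<kappa> s * X s)"
      by (rule sum.cong[OF refl]) (simp add: \<sigma>_gt0[THEN less_imp_neq, symmetric])
    also have "\<dots> = MX"
      using X by (simp add: feasible_def)
    finally show False by (simp only: sum_shares)
  qed
  then show ?thesis
    using \<sigma>_gt0[OF t] r_pos by (simp add: Xs_eq[OF t] field_simps)
qed

lemma sqrt_sum_pos:
  assumes "feasible T \<sigma> MY Y"
  shows "(\<Sum>t\<in>{1..T}. sqrt (\<kappa> t * Y t)) > 0"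
proof -
  have Y_nonneg: "\<And>t. t \<in> {1..T} \<Longrightarrow> Y t \<ge> 0" using assms by (simp add: feasible_def)
  obtain s where s: "s \<in> {1..T}" "Y s \<noteq> 0"
  proof (rule ccontr)
    assume "\<not> thesis"
    then have "\<forall>t\<in>{1..T}. Y t = 0" using that by blast
    then have "(\<Sum>t\<in>{1..T}. \<sigma> t * Y t) = 0" by simp
    with assms MY_pos show False by (simp add: feasible_def)
  qed
  have "Y s > 0" using s Y_nonneg[OF s(1)] by simp
  then have "0 < sqrt (\<kappa> s * Y s)"
    using \<kappa>_gt0[OF s(1)] by simp
  also have "\<dots> \<le> (\<Sum>t\<in>{1..T}. sqrt (\<kappa> t * Y t))"
    using s(1) Y_nonneg \<kappa>_gt0 by (intro member_le_sum) (auto simp: less_imp_le)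
  finally show ?thesis .
qed

lemma exists_feasible_alpha_sqrt_sum:
  assumes Y: "feasible T \<sigma> MY Y"
  shows "\<exists>X. feasible T \<kappa> MX X \<and>
    alpha T X Y = ereal ((\<Sum>t\<in>{1..T}. sqrt (\<kappa> t * Y t)) ^ 2 / MX)"
proof -
  define S where "S = (\<Sum>t\<in>{1..T}. sqrt (\<kappa> t * Y t))"
  have S_pos: "S > 0" unfolding S_def using sqrt_sum_pos[OF Y] .
  have Y_nonneg: "\<And>t. t \<in> {1..T} \<Longrightarrow> Y t \<ge> 0" using Y by (simp add: feasible_def)
  define X where "X t = MX / S * sqrt (\<kappa> t * Y t) / \<kappa> t" for t
  have "(\<Sum>t\<in>{1..T}. \<kappa> t * X t) = (\<Sum>t\<in>{1..T}. MX / S * sqrt (\<kappa> t * Y t))"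
    by (rule sum.cong[OF refl]) (simp add: X_def \<kappa>_gt0[THEN less_imp_neq, symmetric])
  also have "\<dots> = MX / S * S"
    by (simp only: sum_distrib_left[symmetric] S_def[symmetric])
  finally have "(\<Sum>t\<in>{1..T}. \<kappa> t * X t) = MX" using S_pos by simp
  moreover have "X t \<ge> 0" if t: "t \<in> {1..T}" for t
    using \<kappa>_gt0[OF t] Y_nonneg[OF t] S_pos MX_pos by (simp add: X_def)
  ultimately have X_feasible: "feasible T \<kappa> MX X"
    by (simp add: feasible_def)
  have ratio: "Y t / X t = S / MX * sqrt (\<kappa> t * Y t)" if t: "t \<in> {1..T}" for t
  proof -
    have "Y t / X t = S / MX * ((\<kappa> t * Y t) / sqrt (\<kappa> t * Y t))"
      using \<kappa>_gt0[OF t] by (simp add: X_def field_simps)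
    then show ?thesis
      using \<kappa>_gt0[OF t] Y_nonneg[OF t] by (simp add: real_div_sqrt)
  qed
  have "alpha T X Y = ereal (\<Sum>t\<in>{1..T}. Y t / X t)"
  proof (intro alpha_eq_sum ballI impI)
    fix t assume "t \<in> {1..T}" and "Y t \<noteq> 0"
    then show "X t \<noteq> 0"
      using \<kappa>_gt0[of t] Y_nonneg[of t] S_pos MX_pos by (simp add: X_def)
  qed
  also have "(\<Sum>t\<in>{1..T}. Y t / X t) = (\<Sum>t\<in>{1..T}. S / MX * sqrt (\<kappa> t * Y t))"
    by (rule sum.cong[OF refl]) (rule ratio)
  also have "\<dots> = S / MX * S"
    by (simp only: sum_distrib_left[symmetric] S_def[symmetric])
  finally show ?thesis
    using X_feasible by (auto simp: S_def power2_eq_square)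
qed

lemma Y_unique:
  assumes Y: "feasible T \<sigma> MY Y"
    and best: "\<And>X'. feasible T \<kappa> MX X' \<Longrightarrow> ereal alpha_star \<le> alpha T X' Y"
    and t: "t \<in> {1..T}"
  shows "Y t = Ys t"
proof -
  define u where "u s = sqrt (\<kappa> s * Y s)" for s
  define w where "w s = \<kappa> s / \<sigma> s" for s
  have Y_nonneg: "\<And>s. s \<in> {1..T} \<Longrightarrow> Y s \<ge> 0" using Y by (simp add: feasible_def)
  have w_pos: "\<forall>s\<in>{1..T}. w s > 0" using \<kappa>_gt0 \<sigma>_gt0 by (simp add: w_def)
  have sum_w: "sum w {1..T} = r" by (simp add: w_def r_def)
  have "(\<Sum>s\<in>{1..T}. u s ^ 2 / w s) = (\<Sum>s\<in>{1..T}. \<sigma> s * Y s)"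
  proof (rule sum.cong[OF refl])
    fix s assume s: "s \<in> {1..T}"
    have "u s ^ 2 = \<kappa> s * Y s"
      using \<kappa>_gt0[OF s] Y_nonneg[OF s] by (simp add: u_def)
    then show "u s ^ 2 / w s = \<sigma> s * Y s"
      using \<kappa>_gt0[OF s] \<sigma>_gt0[OF s] by (simp add: w_def)
  qed
  also have "\<dots> = MY" using Y by (simp add: feasible_def)
  finally have sum_u2w: "(\<Sum>s\<in>{1..T}. u s ^ 2 / w s) = MY" .
  obtain X' where "feasible T \<kappa> MX X'" and "alpha T X' Y = ereal ((sum u {1..T}) ^ 2 / MX)"
    using exists_feasible_alpha_sqrt_sum[OF Y] unfolding u_def by blast
  with best have "alpha_star \<le> (sum u {1..T}) ^ 2 / MX" by fastforce
  then have "MY \<le> (sum u {1..T}) ^ 2 / sum w {1..T}"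
    unfolding sum_w using MX_pos r_pos by (simp add: field_simps)
  then have MY_eq: "MY = (sum u {1..T}) ^ 2 / r"
    using sq_sum_div_le_sum_sq_div[OF _ w_pos, of u] unfolding sum_u2w sum_w by simp
  have "u t = sum u {1..T} / r * w t"
    using sum_sq_div_le_imp_proportional[OF _ w_pos, of u] \<open>MY \<le> _\<close> t
    unfolding sum_u2w sum_w by simp
  then have "(u t) ^ 2 = MY / r * (w t) ^ 2"
    using r_pos by (simp add: MY_eq power_mult_distrib power_divide power2_eq_square)
  then have "\<kappa> t * Y t = MY / r * (\<kappa> t / \<sigma> t) * (\<kappa> t / \<sigma> t)"
    using \<kappa>_gt0[OF t] Y_nonneg[OF t] by (simp add: u_def w_def power2_eq_square)
  then show ?thesis
    using \<kappa>_gt0[OF t] \<sigma>_gt0[OF t] r_pos by (simp add: Ys_eq[OF t] field_simps)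
qed

lemma equilibrium_unique:
  assumes "is_equilibrium T \<kappa> \<sigma> MX MY X Y" and "t \<in> {1..T}"
  shows "X t = Xs t \<and> Y t = Ys t"
proof
  have "feasible T \<kappa> MX X" and "feasible T \<sigma> MY Y"
    using assms(1) by (simp_all add: is_equilibrium_def)
  then show "X t = Xs t" and "Y t = Ys t"
    using X_unique equilibrium_alpha_le[OF assms(1)] Y_unique equilibrium_alpha_ge[OF assms(1)] assms(2)
    by blast+
qed

end

theorem lemma1:
  fixes T :: nat and \<kappa> \<sigma> :: "nat \<Rightarrow> real" and MX MY r :: real
    and Xs Ys :: "nat \<Rightarrow> real"
  assumes "T \<ge> 1" and "MX > 0" and "MY > 0"
    and "\<forall>t\<in>{1..T}. \<kappa> t > 0" and "\<forall>t\<in>{1..T}. \<sigma> t > 0"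
    and "r = (\<Sum>t\<in>{1..T}. \<kappa> t / \<sigma> t)"
    and "Xs = (\<lambda>t. MX / \<kappa> t * ((\<kappa> t / \<sigma> t) / r))"
    and "Ys = (\<lambda>t. MY / \<sigma> t * ((\<kappa> t / \<sigma> t) / r))"
  shows "is_equilibrium T \<kappa> \<sigma> MX MY Xs Ys
    \<and> (\<forall>X Y. is_equilibrium T \<kappa> \<sigma> MX MY X Y \<longrightarrow> (\<forall>t\<in>{1..T}. X t = Xs t \<and> Y t = Ys t))
    \<and> piWL T Xs Ys = Lfun (ereal (MY / MX * r))
    \<and> 1 - piWL T Xs Ys = 1 - Lfun (ereal (MY / MX * r))"
proof -
  interpret budget_game T \<kappa> \<sigma> MX MY r Xs Ys
    using assms by unfold_locales
  show ?thesis
    by (simp add: equilibrium_Xs_Ys equilibrium_unique piWL_Xs_Ys)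
qed
end
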